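(* Let a group $G$ act freely on a topological space $X$ and let $p:X\to X/G$ be the projection onto the orbit space (quotient topology). Suppose $X/G$ has an open cover $\mathcal U$ consisting of connected sets such that for every pair $U,V\in\mathcal U$ the union $U\cup V$ is evenly covered by $p$. Then the action is an overlay action.
   Context: An open set $W\subseteq Y$ is evenly covered by $p:X\to Y$ if $p^{-1}(W)$ is a disjoint union of open sets each mapped homeomorphically onto $W$ by $p$. For a continuous map $p:X\to Y$: a slice of $p$ is an open set $U\subseteq X$ such that $p^{-1}(p(U))$ is the disjoint union of a family of open sets $U_s$ ($s\in S$), each mapped by $p$ homeomorphically onto $p(U)$, with $U=U_t$ for some $t\in S$. A covering structure of $p$ is an open cover $\mathcal S$ of $X$ by slices of $p$ such that for every $U\in\mathcal S$, $p^{-1}(p(U))$ is the disjoint union of a family $\{U_j\}_{j\in J}$ of elements of $\mathcal S$, each mapped homeomorphically onto $p(U)$. For a cover $\mathcal S$ and $x\in X$, $st(x,\mathcal S)=\bigcup\{U\in\mathcal S: x\in U\}$. For a free action of $G$ on $X$: a slice of the action is an open $U\subseteq X$ with $U\cap(g\cdot U)\neq\emptyset\Rightarrow g=1_G$. The action is an overlay action if there is a covering structure $\mathcal U$ of the projection $X\to X/G$ such that $st(x,\mathcal U)$ is a slice of the action for every $x\in X$. *)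

theory Defs
  imports "HOL-Analysis.Analysis" "HOL-Algebra.Group_Action"
begin

definition quotient_topology :: "'a topology \<Rightarrow> ('a \<Rightarrow> 'b) \<Rightarrow> 'b topology" where
  "quotient_topology X p =
     topology (\<lambda>U. U \<subseteq> p ` topspace X \<and> openin X {x \<in> topspace X. p x \<in> U})"

lemma istopology_quotient:
  "istopology (\<lambda>U. U \<subseteq> p ` topspace X \<and> openin X {x \<in> topspace X. p x \<in> U})"
proof -
  have int: "{x \<in> topspace X. p x \<in> S \<inter> T} =
             {x \<in> topspace X. p x \<in> S} \<inter> {x \<in> topspace X. p x \<in> T}" for S T
    by auto
  have un: "{x \<in> topspace X. p x \<in> \<Union>K} = \<Union>((\<lambda>U. {x \<in> topspace X. p x \<in> U}) ` K)" for K
    by auto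
  have l1: "S \<inter> T \<subseteq> p ` topspace X \<and> openin X {x \<in> topspace X. p x \<in> S \<inter> T}"
    if "S \<subseteq> p ` topspace X \<and> openin X {x \<in> topspace X. p x \<in> S}"
       "T \<subseteq> p ` topspace X \<and> openin X {x \<in> topspace X. p x \<in> T}" for S T
    using that by (simp only: int) (meson le_infI1 openin_Int)
  have l2: "\<Union>K \<subseteq> p ` topspace X \<and> openin X {x \<in> topspace X. p x \<in> \<Union>K}"
    if "\<forall>U\<in>K. U \<subseteq> p ` topspace X \<and> openin X {x \<in> topspace X. p x \<in> U}" for K
  proof
    show "\<Union>K \<subseteq> p ` topspace X" using that by blast
    show "openin X {x \<in> topspace X. p x \<in> \<Union>K}"
      unfolding un using that by (intro openin_Union) blast
  qed
  show ?thesis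
    unfolding istopology_def using l1 l2 by blast
qed

lemma openin_quotient_topology:
  "openin (quotient_topology X p) U \<longleftrightarrow>
     U \<subseteq> p ` topspace X \<and> openin X {x \<in> topspace X. p x \<in> U}"
  unfolding quotient_topology_def
  by (simp add: topology_inverse' istopology_quotient)

definition orbit_space :: "('g, 'm) monoid_scheme \<Rightarrow> ('g \<Rightarrow> 'a \<Rightarrow> 'a) \<Rightarrow> 'a topology \<Rightarrow> 'a set topology" where
  "orbit_space G \<phi> X = quotient_topology X (orbit G \<phi>)"

definition evenly_covered :: "'a topology \<Rightarrow> 'b topology \<Rightarrow> ('a \<Rightarrow> 'b) \<Rightarrow> 'b set \<Rightarrow> bool" where
  "evenly_covered X Y p W \<longleftrightarrow> openin Y W \<and>
     (\<exists>\<V>. pairwise disjnt \<V> \<and> \<Union>\<V> = {x \<in> topspace X. p x \<in> W} \<and>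
          (\<forall>V\<in>\<V>. openin X V \<and> homeomorphic_map (subtopology X V) (subtopology Y W) p))"

definition slice_map :: "'a topology \<Rightarrow> 'b topology \<Rightarrow> ('a \<Rightarrow> 'b) \<Rightarrow> 'a set \<Rightarrow> bool" where
  "slice_map X Y p U \<longleftrightarrow> openin X U \<and>
     (\<exists>\<V>. U \<in> \<V> \<and> pairwise disjnt \<V> \<and> \<Union>\<V> = {x \<in> topspace X. p x \<in> p ` U} \<and>
          (\<forall>V\<in>\<V>. openin X V \<and> homeomorphic_map (subtopology X V) (subtopology Y (p ` U)) p))"

definition covering_structure :: "'a topology \<Rightarrow> 'b topology \<Rightarrow> ('a \<Rightarrow> 'b) \<Rightarrow> 'a set set \<Rightarrow> bool" where
  "covering_structure X Y p \<S> \<longleftrightarrow>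
     \<Union>\<S> = topspace X \<and> (\<forall>U\<in>\<S>. slice_map X Y p U) \<and>
     (\<forall>U\<in>\<S>. \<exists>\<V>. \<V> \<subseteq> \<S> \<and> pairwise disjnt \<V> \<and> \<Union>\<V> = {x \<in> topspace X. p x \<in> p ` U} \<and>
          (\<forall>V\<in>\<V>. homeomorphic_map (subtopology X V) (subtopology Y (p ` U)) p))"

definition star :: "'a \<Rightarrow> 'a set set \<Rightarrow> 'a set" where
  "star x \<S> = \<Union>{U \<in> \<S>. x \<in> U}"

definition free_action :: "('g, 'm) monoid_scheme \<Rightarrow> ('g \<Rightarrow> 'a \<Rightarrow> 'a) \<Rightarrow> 'a set \<Rightarrow> bool" where
  "free_action G \<phi> E \<longleftrightarrow> (\<forall>g\<in>carrier G. \<forall>x\<in>E. \<phi> g x = x \<longrightarrow> g = \<one>\<^bsub>G\<^esub>)"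

definition slice_action :: "('g, 'm) monoid_scheme \<Rightarrow> ('g \<Rightarrow> 'a \<Rightarrow> 'a) \<Rightarrow> 'a topology \<Rightarrow> 'a set \<Rightarrow> bool" where
  "slice_action G \<phi> X U \<longleftrightarrow> openin X U \<and>
     (\<forall>g\<in>carrier G. U \<inter> \<phi> g ` U \<noteq> {} \<longrightarrow> g = \<one>\<^bsub>G\<^esub>)"

definition overlay_action :: "('g, 'm) monoid_scheme \<Rightarrow> ('g \<Rightarrow> 'a \<Rightarrow> 'a) \<Rightarrow> 'a topology \<Rightarrow> bool" where
  "overlay_action G \<phi> X \<longleftrightarrow>
     (\<exists>\<U>. covering_structure X (orbit_space G \<phi> X) (orbit G \<phi>) \<U> \<and>
          (\<forall>x\<in>topspace X. slice_action G \<phi> X (star x \<U>)))"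

end

theory Submission
  imports Defs
begin

text \<open>Choose, for every \<open>U \<in> \<U>\<close>, a decomposition of \<open>p\<^sup>-\<^sup>1(U)\<close> into sheets and let the
  covering structure consist of all these sheets. Each sheet is connected, being homeomorphic to
  the connected set \<open>U\<close>. If two sheets \<open>A\<close> over \<open>U\<close> and \<open>B\<close> over \<open>V\<close> share a point, then both lie
  in one sheet over the evenly covered set \<open>U \<union> V\<close> (connected sets cannot cross between disjoint
  open sheets), so \<open>p\<close> is injective on \<open>A \<union> B\<close>. Hence \<open>p\<close> is injective on every star, and
  for the orbit map of a free action injectivity on an open set is exactly the slice property.\<close>

definition sheets_over :: "'a topology \<Rightarrow> 'b topology \<Rightarrow> ('a \<Rightarrow> 'b) \<Rightarrow> 'b set \<Rightarrow> 'a set set \<Rightarrow> bool" where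
  "sheets_over X Y p W \<V> \<longleftrightarrow> pairwise disjnt \<V> \<and> \<Union>\<V> = {x \<in> topspace X. p x \<in> W} \<and>
     (\<forall>V\<in>\<V>. openin X V \<and> homeomorphic_map (subtopology X V) (subtopology Y W) p)"

lemma evenly_covered_iff_sheets_over:
  "evenly_covered X Y p W \<longleftrightarrow> openin Y W \<and> (\<exists>\<V>. sheets_over X Y p W \<V>)"
  unfolding evenly_covered_def sheets_over_def by simp

lemma topspace_quotient_topology: "topspace (quotient_topology X p) = p ` topspace X"
proof -
  have "{x \<in> topspace X. p x \<in> p ` topspace X} = topspace X" by blast
  then have "openin (quotient_topology X p) (p ` topspace X)"
    by (simp add: openin_quotient_topology)
  then show ?thesis
    using openin_subset openin_quotient_topology[of X p "topspace (quotient_topology X p)"]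
    by blast
qed

lemma connectedin_subset_disjoint_open_member:
  assumes "connectedin X A" "A \<subseteq> \<Union>\<W>" "pairwise disjnt \<W>" "\<And>W. W \<in> \<W> \<Longrightarrow> openin X W"
    and "W \<in> \<W>" "x \<in> A" "x \<in> W"
  shows "A \<subseteq> W"
proof (rule ccontr)
  assume "\<not> A \<subseteq> W"
  let ?R = "\<Union>(\<W> - {W})"
  have "openin X ?R" using assms(4) by (intro openin_Union) blast
  moreover have "A \<subseteq> W \<union> ?R" "W \<inter> ?R = {}" "W \<inter> A \<noteq> {}" "?R \<inter> A \<noteq> {}"
    using assms(2,3,5-7) \<open>\<not> A \<subseteq> W\<close> by (auto simp: pairwise_def disjnt_def)
  ultimately show False
    using assms(1,4,5) unfolding connectedin by blast
qed

lemma homeomorphic_map_subtopologies_image_inj_connectedin: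
  assumes "A \<subseteq> topspace X" "U \<subseteq> topspace Y"
    and hm: "homeomorphic_map (subtopology X A) (subtopology Y U) p"
  shows "p ` A = U" "inj_on p A" "connectedin X A \<longleftrightarrow> connectedin Y U"
proof -
  show "p ` A = U" "inj_on p A"
    using homeomorphic_imp_surjective_map[OF hm] homeomorphic_imp_injective_map[OF hm] assms(1,2)
    by (simp_all add: Int_absorb1)
  have "subtopology X A homeomorphic_space subtopology Y U"
    using hm homeomorphic_map_imp_homeomorphic_space by blast
  then show "connectedin X A \<longleftrightarrow> connectedin Y U"
    using assms(1,2) homeomorphic_connected_space by (auto simp: connectedin_def)
qed

lemma inj_on_connected_Un_over_evenly_covered:
  assumes "evenly_covered X Y p W" "connectedin X A" "connectedin X B"
    and "p ` (A \<union> B) \<subseteq> W" "A \<inter> B \<noteq> {}"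
  shows "inj_on p (A \<union> B)"
proof -
  obtain \<W> where \<W>: "sheets_over X Y p W \<W>"
    using assms(1) evenly_covered_iff_sheets_over by blast
  then have opens: "\<And>V. V \<in> \<W> \<Longrightarrow> openin X V" and disj: "pairwise disjnt \<W>"
    unfolding sheets_over_def by simp_all
  have covered: "A \<subseteq> \<Union>\<W>" "B \<subseteq> \<Union>\<W>"
    using \<W> assms(2-4) connectedin_subset_topspace unfolding sheets_over_def by blast+
  obtain x where x: "x \<in> A" "x \<in> B" using assms(5) by blast
  then obtain V where V: "V \<in> \<W>" "x \<in> V" using covered by blast
  have "A \<union> B \<subseteq> V"
    using connectedin_subset_disjoint_open_member[OF assms(2) covered(1) disj opens V(1) x(1) V(2)]
      connectedin_subset_disjoint_open_member[OF assms(3) covered(2) disj opens V(1) x(2) V(2)]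
    by blast
  moreover have "inj_on p V"
    using \<W> V(1) openin_subset homeomorphic_imp_injective_map unfolding sheets_over_def
    by (metis topspace_subtopology_subset)
  ultimately show ?thesis by (rule inj_on_subset[rotated])
qed

lemma inj_on_star:
  assumes "\<And>A. A \<in> \<S> \<Longrightarrow> connectedin X A"
    and "\<And>A B. \<lbrakk>A \<in> \<S>; B \<in> \<S>\<rbrakk> \<Longrightarrow> \<exists>W. evenly_covered X Y p W \<and> p ` (A \<union> B) \<subseteq> W"
  shows "inj_on p (star x \<S>)"
proof
  fix y z assume "y \<in> star x \<S>" "z \<in> star x \<S>" "p y = p z"
  then obtain A B where AB: "A \<in> \<S>" "B \<in> \<S>" "x \<in> A" "x \<in> B" "y \<in> A" "z \<in> B"
    unfolding star_def by blast
  obtain W where "evenly_covered X Y p W" "p ` (A \<union> B) \<subseteq> W" using assms(2) AB(1,2) by blast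
  then have "inj_on p (A \<union> B)"
    using inj_on_connected_Un_over_evenly_covered assms(1) AB by blast
  then show "y = z" using AB(5,6) \<open>p y = p z\<close> by (auto dest: inj_onD)
qed

lemma covering_structure_Union_sheets:
  assumes cover: "p ` topspace X \<subseteq> \<Union>\<U>" and "\<And>U. U \<in> \<U> \<Longrightarrow> U \<subseteq> topspace Y"
    and sheets: "\<And>U. U \<in> \<U> \<Longrightarrow> sheets_over X Y p U (D U)"
  shows "covering_structure X Y p (\<Union>U\<in>\<U>. D U)"
  unfolding covering_structure_def
proof (intro conjI ballI)
  have "\<Union>(\<Union>U\<in>\<U>. D U) = (\<Union>U\<in>\<U>. \<Union>(D U))" by blast
  also have "\<dots> = (\<Union>U\<in>\<U>. {x \<in> topspace X. p x \<in> U})"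
    using sheets by (intro SUP_cong) (simp_all add: sheets_over_def)
  also have "\<dots> = topspace X"
    using cover by auto
  finally show "\<Union>(\<Union>U\<in>\<U>. D U) = topspace X" .
next
  fix A assume "A \<in> (\<Union>U\<in>\<U>. D U)"
  then obtain U where U: "U \<in> \<U>" "A \<in> D U" by blast
  have DU: "sheets_over X Y p U (D U)" by (rule sheets[OF U(1)])
  have A: "openin X A" "homeomorphic_map (subtopology X A) (subtopology Y U) p"
    using DU U(2) by (simp_all add: sheets_over_def)
  have "p ` A = U"
    by (rule homeomorphic_map_subtopologies_image_inj_connectedin(1)[OF openin_subset[OF A(1)] assms(2)[OF U(1)] A(2)])
  with DU have "sheets_over X Y p (p ` A) (D U)" by simp
  then show "slice_map X Y p A"
    using A(1) U(2) unfolding slice_map_def sheets_over_def by blast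
  show "\<exists>\<V>\<subseteq>\<Union>U\<in>\<U>. D U. pairwise disjnt \<V> \<and> \<Union>\<V> = {x \<in> topspace X. p x \<in> p ` A} \<and>
          (\<forall>V\<in>\<V>. homeomorphic_map (subtopology X V) (subtopology Y (p ` A)) p)"
    using \<open>sheets_over X Y p (p ` A) (D U)\<close> U(1) unfolding sheets_over_def
    by (intro exI[of _ "D U"]) blast
qed

lemma covering_structure_with_injective_stars:
  assumes "p ` topspace X \<subseteq> \<Union>\<U>"
    and "\<And>U. U \<in> \<U> \<Longrightarrow> openin Y U \<and> connectedin Y U"
    and "\<And>U V. \<lbrakk>U \<in> \<U>; V \<in> \<U>\<rbrakk> \<Longrightarrow> evenly_covered X Y p (U \<union> V)"
  obtains \<S> where "covering_structure X Y p \<S>"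
    "\<And>x. openin X (star x \<S>)" "\<And>x. inj_on p (star x \<S>)"
proof -
  define D where "D U = (SOME \<V>. sheets_over X Y p U \<V>)" for U
  have D: "sheets_over X Y p U (D U)" if "U \<in> \<U>" for U
    using assms(3)[OF that that] unfolding D_def evenly_covered_iff_sheets_over
    by (auto intro: someI_ex)
  have sheet: "openin X A \<and> connectedin X A \<and> p ` A = U" if "U \<in> \<U>" "A \<in> D U" for U A
    using D[OF that(1)] that assms(2)[OF that(1)] openin_subset
      homeomorphic_map_subtopologies_image_inj_connectedin[of A X U Y p]
    unfolding sheets_over_def by blast
  define \<S> where "\<S> = (\<Union>U\<in>\<U>. D U)"
  show thesis
  proof
    show "covering_structure X Y p \<S>"
      unfolding \<S>_def
      using assms(1) assms(2)[THEN conjunct1, THEN openin_subset] D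
      by (rule covering_structure_Union_sheets)
    show "openin X (star x \<S>)" for x
      unfolding star_def \<S>_def using sheet by (intro openin_Union) blast
    show "inj_on p (star x \<S>)" for x
    proof (rule inj_on_star)
      show "connectedin X A" if "A \<in> \<S>" for A using that sheet unfolding \<S>_def by blast
      show "\<exists>W. evenly_covered X Y p W \<and> p ` (A \<union> B) \<subseteq> W" if "A \<in> \<S>" "B \<in> \<S>" for A B
        using that sheet assms(3) unfolding \<S>_def by (metis UN_E image_Un order_refl)
    qed
  qed
qed

lemma (in group_action) orbit_action_eq:
  assumes "g \<in> carrier G" "x \<in> E"
  shows "orbit G \<phi> (\<phi> g x) = orbit G \<phi> x"
proof -
  have gx: "\<phi> g x \<in> E" "\<phi> g x \<in> orbit G \<phi> x"
    using assms element_image unfolding orbit_def by blast+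
  then have "x \<in> orbit G \<phi> (\<phi> g x)" using assms(2) orbit_sym by blast
  moreover have "orbit G \<phi> y \<subseteq> E" if "y \<in> E" for y
    using that element_image unfolding orbit_def by blast
  ultimately show ?thesis
    using orbit_trans[OF assms(2) gx(1)] orbit_trans[OF gx(1) assms(2)] gx assms(2) by blast
qed

lemma (in group_action) slice_action_if_inj_on_orbit:
  assumes "free_action G \<phi> E" "openin X U" "U \<subseteq> E" "inj_on (orbit G \<phi>) U"
  shows "slice_action G \<phi> X U"
  unfolding slice_action_def
proof (intro conjI ballI impI)
  fix g assume g: "g \<in> carrier G" and "U \<inter> \<phi> g ` U \<noteq> {}"
  then obtain y where y: "y \<in> U" "\<phi> g y \<in> U" by blast
  then have "\<phi> g y = y"
    using assms(3,4) orbit_action_eq[OF g] by (metis inj_onD subsetD)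
  then show "g = \<one>\<^bsub>G\<^esub>"
    using assms(1,3) g y(1) unfolding free_action_def by blast
qed (rule assms(2))

theorem proposition3p4:
  fixes G :: "('g, 'm) monoid_scheme" and \<phi> :: "'g \<Rightarrow> 'a \<Rightarrow> 'a" and X :: "'a topology"
    and \<U> :: "'a set set set"
  assumes "group_action G (topspace X) \<phi>"
    and "\<And>g. g \<in> carrier G \<Longrightarrow> continuous_map X X (\<phi> g)"
    and "free_action G \<phi> (topspace X)"
    and "\<Union>\<U> = topspace (orbit_space G \<phi> X)"
    and "\<And>U. U \<in> \<U> \<Longrightarrow> openin (orbit_space G \<phi> X) U \<and> connectedin (orbit_space G \<phi> X) U"
    and "\<And>U V. \<lbrakk>U \<in> \<U>; V \<in> \<U>\<rbrakk> \<Longrightarrow> evenly_covered X (orbit_space G \<phi> X) (orbit G \<phi>) (U \<union> V)"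
  shows "overlay_action G \<phi> X"
proof -
  interpret group_action G "topspace X" \<phi> by (rule assms(1))
  have covers: "orbit G \<phi> ` topspace X \<subseteq> \<Union>\<U>"
    using assms(4) by (simp add: orbit_space_def topspace_quotient_topology)
  obtain \<S> where \<S>: "covering_structure X (orbit_space G \<phi> X) (orbit G \<phi>) \<S>"
    "\<And>x. openin X (star x \<S>)" "\<And>x. inj_on (orbit G \<phi>) (star x \<S>)"
    using covering_structure_with_injective_stars[OF covers assms(5) assms(6)] by blast
  have "slice_action G \<phi> X (star x \<S>)" for x
    by (rule slice_action_if_inj_on_orbit[OF assms(3) \<S>(2) openin_subset[OF \<S>(2)] \<S>(3)])
  then show ?thesis
    unfolding overlay_action_def using \<S>(1) by blast
qed

end
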